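(* Let $\varphi(s,v)=\vec c(s)+v\vec q(s)$ be a developable timelike ruled surface of type $M^1_-$ in $\mathbb{R}^3_1$, and let $\varphi^*(s,v)=\vec c(s)+R\vec a(s)+v\vec q^*(s)$ be a timelike ruled surface that is a Mannheim offset of $\varphi$, with $\theta$ the angle between $\vec q$ and $\vec q^*$. (i) If $\varphi^*$ is of type $M^1_+$, then $\varphi^*$ is developable if and only if $\cosh\theta+R\kappa\frac{ds_1}{ds}\sinh\theta=0$. (ii) If $\varphi^*$ is of type $M^1_-$, then $\varphi^*$ is developable if and only if $\sinh\theta+R\kappa\frac{ds_1}{ds}\cosh\theta=0$.
   Context: Work in Minkowski 3-space $\mathbb{R}^3_1$, i.e. $\mathbb{R}^3$ with $\langle x,y\rangle=-x_1y_1+x_2y_2+x_3y_3$, norm $\|x\|=\sqrt{|\langle x,x\rangle|}$, and Lorentzian cross product $x\times y=(x_2y_3-x_3y_2,\,x_1y_3-x_3y_1,\,x_2y_1-x_1y_2)$. A ruled surface is $\varphi(s,v)=\vec c(s)+v\vec q(s)$, where $\vec q$ is a unit non-null vector field with $\langle\vec q,\vec q\rangle=\varepsilon_2\in\{\pm1\}$, $d\vec q/ds$ is non-null, and the base curve $\vec c$ is the striction curve, i.e. $\langle d\vec q/ds,d\vec c/ds\rangle=0$; $s$ is the arc-length parameter of $\vec c$. Its Frenet frame is $\{\vec q,\vec h,\vec a\}$ with central normal $\vec h=\frac{d\vec q/ds}{\|d\vec q/ds\|}$ and asymptotic normal $\vec a=\frac{(d\vec q/ds)\times\vec q}{\|d\vec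 q/ds\|}$. The surface is of type $M^1_-$ if $\vec q$ is timelike and $\vec h$ spacelike; of type $M^1_+$ if $\vec q$ and $\vec h$ are both spacelike (both types are timelike surfaces). Let $s_1$ be the arc-length parameter of the spherical image curve traced by $\vec q$ on the unit hyperbolic/Lorentzian sphere, and $\kappa$ the conical curvature of the directing cone; for types $M^1_\pm$ the Frenet formulas are $d\vec q/ds_1=\vec h$, $d\vec h/ds_1=-\varepsilon_2\vec q+\kappa\vec a$, $d\vec a/ds_1=\varepsilon_2\kappa\vec h$. The distribution parameter is $d_\varphi=\det(d\vec c/ds,\vec q,d\vec q/ds)/\langle d\vec q/ds,d\vec q/ds\rangle$, and a ruled surface is developable iff its distribution parameter vanishes identically. A ruled surface $\varphi^*(s,v)=\vec c^*(s)+v\vec q^*(s)$ with striction curve $\vec c^*$ and Frenet frame $\{\vec q^*,\vec h^*,\vec a^*\}$ is a Mannheim offset of the timelike ruled surface $\varphi$ if there is a one-to-one correspondence between rulings with $\vec h^*=\vec a$; then $\vec c^*=\vec c+R\vec a$, and since $\varphi$ is developable $R$ is constant. With $\theta$ the angle between $\vec q$ and $\vec q^*$: if $\varphi$ is of type $M^1_-$ and $\varphi^*$ of type $M^1_+$, then $\vec q^*=\sinh\theta\,\vec q+\cosh\theta\,\vec h$, $\vec a^*=\cosh\theta\,\vec q+\sinh\theta\,\vec h$; if both are of type $M^1_-$, then $\vec q^*=\cosh\theta\,\vec q+\sinh\theta\,\vec h$, $\vec a^*=\sinh\theta\,\vec q+\cosh\theta\,\vec h$. *)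

theory Defs
  imports "HOL-Analysis.Analysis"
begin

definition lor :: "real^3 \<Rightarrow> real^3 \<Rightarrow> real" where
  "lor x y = - (x$1 * y$1) + x$2 * y$2 + x$3 * y$3"

definition lnorm :: "real^3 \<Rightarrow> real" where
  "lnorm x = sqrt \<bar>lor x x\<bar>"

definition lcross :: "real^3 \<Rightarrow> real^3 \<Rightarrow> real^3" where
  "lcross x y = vector [x$2 * y$3 - x$3 * y$2, x$1 * y$3 - x$3 * y$1, x$2 * y$1 - x$1 * y$2]"

definition det3 :: "real^3 \<Rightarrow> real^3 \<Rightarrow> real^3 \<Rightarrow> real" where
  "det3 x y z = x$1 * (y$2 * z$3 - y$3 * z$2) - x$2 * (y$1 * z$3 - y$3 * z$1)
               + x$3 * (y$1 * z$2 - y$2 * z$1)"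

definition spacelike :: "real^3 \<Rightarrow> bool" where
  "spacelike x \<longleftrightarrow> lor x x > 0"

definition timelike :: "real^3 \<Rightarrow> bool" where
  "timelike x \<longleftrightarrow> lor x x < 0"

definition nonnull :: "real^3 \<Rightarrow> bool" where
  "nonnull x \<longleftrightarrow> lor x x \<noteq> 0"

text \<open>Central normal h = (dq/ds)/||dq/ds|| and asymptotic normal
  a = ((dq/ds) x q)/||dq/ds||, as functions of the values q(s), dq/ds(s).\<close>
definition cnormal :: "real^3 \<Rightarrow> real^3" where
  "cnormal dq = (1 / lnorm dq) *\<^sub>R dq"

definition anormal :: "real^3 \<Rightarrow> real^3 \<Rightarrow> real^3" where
  "anormal q dq = (1 / lnorm dq) *\<^sub>R lcross dq q"

definition dist_param :: "real^3 \<Rightarrow> real^3 \<Rightarrow> real^3 \<Rightarrow> real" where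
  "dist_param dc q dq = det3 dc q dq / lor dq dq"

end

theory Submission
  imports Defs
begin

text \<open>Since \<open>\<phi>\<close> is developable and \<open>\<vec>c\<close> is its striction curve, \<open>d\<vec>c/ds\<close> is orthogonal to
  both \<open>\<vec>h\<close> and \<open>\<vec>a\<close>, so the unit tangent of the base curve is the ruling \<open>\<vec>q\<close> itself.
  The Frenet formulas give \<open>d\<vec>a/ds = -\<kappa> (ds\<^sub>1/ds) \<vec>h\<close>, hence the base curve of the offset
  has tangent \<open>\<vec>q - R\<kappa> (ds\<^sub>1/ds) \<vec>h\<close>. As \<open>d\<vec>q\<^sup>*/ds\<close> is a multiple of \<open>\<vec>a\<close>, the
  distribution parameter of \<open>\<phi>\<^sup>*\<close> is a positive multiple of the \<open>\<vec>q,\<vec>h\<close>-determinant of this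
  tangent and \<open>\<vec>q\<^sup>*\<close>, which is the stated expression in both cases. Everything happens
  pointwise.\<close>

lemma vec3_eq_iff: "(v::real^3) = w \<longleftrightarrow> v$1 = w$1 \<and> v$2 = w$2 \<and> v$3 = w$3"
  by (simp add: vec_eq_iff forall_3)

lemma lor_commute: "lor x y = lor y x"
  by (simp add: lor_def algebra_simps)

lemma lor_scaleR_left: "lor (k *\<^sub>R x) y = k * lor x y"
  and lor_scaleR_right: "lor x (k *\<^sub>R y) = k * lor x y"
  and lor_minus_left: "lor (- x) y = - lor x y"
  and lor_minus_right: "lor x (- y) = - lor x y"
  by (simp_all add: lor_def algebra_simps)

lemma lcross_scaleR_left: "lcross (k *\<^sub>R x) y = k *\<^sub>R lcross x y"
  and lcross_add_left: "lcross (x + y) z = lcross x z + lcross y z"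
  and lcross_scaleR_self: "lcross x (k *\<^sub>R x) = 0"
  and lcross_self: "lcross x x = 0"
  by (simp_all add: vec3_eq_iff lcross_def algebra_simps)

lemma lcross_lcross: "lcross (lcross x y) z = lor y z *\<^sub>R x - lor x z *\<^sub>R y"
  by (simp add: vec3_eq_iff lcross_def lor_def algebra_simps)

lemma lor_lcross_lcross: "lor (lcross x y) (lcross x y) = (lor x y)\<^sup>2 - lor x x * lor y y"
  by (simp add: lcross_def lor_def algebra_simps power2_eq_square)

lemma lor_lcross_eq_det3: "lor (lcross x y) z = - det3 x y z"
  by (simp add: lcross_def lor_def det3_def algebra_simps)

lemma det3_rotate: "det3 x y z = det3 z x y"
  and det3_swap: "det3 x y z = - det3 x z y"
  by (simp_all add: det3_def algebra_simps)

lemma det3_scaleR_right: "det3 x y (k *\<^sub>R z) = k * det3 x y z"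
  by (simp add: det3_def algebra_simps)

lemma det3_plane: "det3 (y - k *\<^sub>R z) (\<alpha> *\<^sub>R y + \<beta> *\<^sub>R z) w = (\<beta> + k * \<alpha>) * det3 y z w"
  by (simp add: det3_def algebra_simps)

lemma anormal_eq_lcross: "anormal q dq = lcross (cnormal dq) q"
  by (simp add: anormal_def cnormal_def lcross_scaleR_left)

lemma lnorm_pos: "spacelike x \<Longrightarrow> lnorm x > 0"
  by (simp add: spacelike_def lnorm_def)

lemma scaleR_lnorm_cnormal: "spacelike x \<Longrightarrow> x = lnorm x *\<^sub>R cnormal x"
  using lnorm_pos[of x] by (simp add: cnormal_def)

lemma lor_cnormal_cnormal: "spacelike x \<Longrightarrow> lor (cnormal x) (cnormal x) = 1"
  by (simp add: spacelike_def cnormal_def lnorm_def lor_scaleR_left lor_scaleR_right)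

lemma lorentz_frame_expansion:
  assumes "lor Q Q = -1" "lor H H = 1" "lor Q H = 0"
  shows "C = (- lor C Q) *\<^sub>R Q + lor C H *\<^sub>R H + lor C (lcross H Q) *\<^sub>R lcross H Q"
  using assms unfolding vec3_eq_iff by (simp add: lcross_def lor_def; algebra)

lemma det3_lorentz_frame:
  assumes "lor Q Q = -1" "lor H H = 1" "lor Q H = 0"
  shows "det3 Q H (lcross H Q) = 1"
proof -
  have "det3 Q H (lcross H Q) = lor (lcross H Q) (lcross H Q)"
    using lor_lcross_eq_det3[of H Q "lcross H Q"] det3_swap[of H Q] det3_rotate[of H "lcross H Q" Q]
      det3_rotate[of Q H "lcross H Q"] by simp
  also have "\<dots> = 1"
    using assms lor_commute[of Q H] by (simp add: lor_lcross_lcross)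
  finally show ?thesis .
qed

lemma has_real_derivative_vec_nth:
  "(f has_vector_derivative D) (at s) \<Longrightarrow> ((\<lambda>t. (f t :: real^3) $ i) has_real_derivative D $ i) (at s)"
  using bounded_linear.has_vector_derivative[OF bounded_linear_vec_nth, of f D "at s" i]
  by (simp add: has_real_derivative_iff_has_vector_derivative)

lemma has_vector_derivative_vector3:
  assumes "(f1 has_real_derivative d1) (at s)" "(f2 has_real_derivative d2) (at s)"
    "(f3 has_real_derivative d3) (at s)"
  shows "((\<lambda>t. vector [f1 t, f2 t, f3 t] :: real^3) has_vector_derivative vector [d1, d2, d3]) (at s)"
proof -
  have axes: "(vector [a, b, c] :: real^3) = a *\<^sub>R axis 1 1 + b *\<^sub>R axis 2 1 + c *\<^sub>R axis 3 1"
    for a b c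
    by (simp add: vec3_eq_iff axis_def)
  have scaled: "((\<lambda>t. f t *\<^sub>R v) has_vector_derivative d *\<^sub>R v) (at s)"
    if "(f has_real_derivative d) (at s)" for f d and v :: "real^3"
    using bounded_linear.has_vector_derivative[OF bounded_linear_scaleR_left, of f d "at s" v] that
    by (simp add: has_real_derivative_iff_has_vector_derivative)
  show ?thesis
    unfolding axes by (intro has_vector_derivative_add scaled assms)
qed

lemma has_vector_derivative_lcross:
  assumes "(x has_vector_derivative dx) (at s)" "(y has_vector_derivative dy) (at s)"
  shows "((\<lambda>t. lcross (x t) (y t)) has_vector_derivative lcross dx (y s) + lcross (x s) dy) (at s)"
proof -
  note has_real_derivative_vec_nth[OF assms(1)] has_real_derivative_vec_nth[OF assms(2)]
  then have "((\<lambda>t. lcross (x t) (y t)) has_vector_derivative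
     vector [dx$2 * y s$3 + dy$3 * x s$2 - (dx$3 * y s$2 + dy$2 * x s$3),
             dx$1 * y s$3 + dy$3 * x s$1 - (dx$3 * y s$1 + dy$1 * x s$3),
             dx$2 * y s$1 + dy$1 * x s$2 - (dx$1 * y s$2 + dy$2 * x s$1)]) (at s)"
    (is "(_ has_vector_derivative ?v) _")
    unfolding lcross_def by (intro has_vector_derivative_vector3 DERIV_diff DERIV_mult)
  also have "?v = lcross dx (y s) + lcross (x s) dy"
    by (simp add: vec3_eq_iff lcross_def algebra_simps)
  finally show ?thesis .
qed

lemma has_real_derivative_lor_self:
  assumes "(x has_vector_derivative dx) (at s)"
  shows "((\<lambda>t. lor (x t) (x t)) has_real_derivative 2 * lor (x s) dx) (at s)"
proof -
  note has_real_derivative_vec_nth[OF assms]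
  then have "((\<lambda>t. lor (x t) (x t)) has_real_derivative
     - (dx$1 * x s$1 + dx$1 * x s$1) + (dx$2 * x s$2 + dx$2 * x s$2) + (dx$3 * x s$3 + dx$3 * x s$3))
     (at s)"
    unfolding lor_def by (intro DERIV_add DERIV_minus DERIV_mult)
  then show ?thesis
    by (simp add: lor_def algebra_simps)
qed

lemma lor_derivative_eq_0_if_lor_const:
  assumes "open I" "s \<in> I" "\<And>t. t \<in> I \<Longrightarrow> lor (x t) (x t) = k"
    and "(x has_vector_derivative dx) (at s)"
  shows "lor (x s) dx = 0"
proof -
  have "((\<lambda>t. lor (x t) (x t)) has_real_derivative 0) (at s)"
    using has_field_derivative_transform_within_open[OF DERIV_const[of k] assms(1,2)] assms(3)
    by simp
  with has_real_derivative_lor_self[OF assms(4)] show ?thesis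
    using DERIV_unique by fastforce
qed

lemma developable_tangent_eq_ruling:
  assumes QQ: "lor Q Q = -1" and D: "spacelike D" and QD: "lor Q D = 0"
    and DC: "lor D C = 0" and dev: "det3 C Q D = 0"
    and unit: "lnorm C = 1" and orient: "lor C Q < 0"
  shows "C = Q"
proof -
  define H where "H = cnormal D"
  have HH: "lor H H = 1"
    using D by (simp add: H_def lor_cnormal_cnormal)
  have DH: "D = lnorm D *\<^sub>R H"
    using D by (simp add: H_def scaleR_lnorm_cnormal[symmetric])
  have QH: "lor Q H = 0" and CH: "lor C H = 0"
    using QD DC lor_commute[of D C] by (simp_all add: H_def cnormal_def lor_scaleR_right)
  have "det3 C Q H = 0"
    using dev lnorm_pos[OF D] by (subst (asm) DH) (simp add: det3_scaleR_right)
  then have "lor C (lcross H Q) = 0"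
    using lor_lcross_eq_det3[of H Q C] lor_commute[of C] det3_swap[of H C Q]
      det3_rotate[of C Q H] det3_rotate[of H C Q] by simp
  then have C: "C = (- lor C Q) *\<^sub>R Q"
    using lorentz_frame_expansion[OF QQ HH QH, of C] CH by simp
  have "lor C C = - (lor C Q)\<^sup>2"
    by (subst (1 2) C) (simp add: lor_scaleR_left lor_scaleR_right lor_minus_left lor_minus_right QQ
        power2_eq_square)
  with unit have "\<bar>lor C Q\<bar> = 1"
    by (simp add: lnorm_def)
  with orient have "lor C Q = -1"
    by simp
  with C show ?thesis by simp
qed

lemma has_vector_derivative_anormal:
  assumes q: "(q has_vector_derivative dq s) (at s)"
    and h: "((\<lambda>t. cnormal (dq t)) has_vector_derivative
              L *\<^sub>R (q s + \<kappa> *\<^sub>R anormal (q s) (dq s))) (at s)"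
    and QQ: "lor (q s) (q s) = -1" and QD: "lor (q s) (dq s) = 0" and D: "spacelike (dq s)"
  shows "((\<lambda>t. anormal (q t) (dq t)) has_vector_derivative
           (- (L * \<kappa>)) *\<^sub>R cnormal (dq s)) (at s)"
proof -
  define H where "H = cnormal (dq s)"
  have "lcross H (dq s) = 0"
    by (subst scaleR_lnorm_cnormal[OF D]) (simp add: H_def lcross_scaleR_self)
  moreover have "lor H (q s) = 0"
    using QD lor_commute[of "dq s"] by (simp add: H_def cnormal_def lor_scaleR_left)
  then have "lcross (anormal (q s) (dq s)) (q s) = - H"
    by (simp add: anormal_eq_lcross H_def[symmetric] lcross_lcross QQ)
  ultimately have "lcross (L *\<^sub>R (q s + \<kappa> *\<^sub>R anormal (q s) (dq s))) (q s) + lcross H (dq s)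
      = (- (L * \<kappa>)) *\<^sub>R H"
    by (simp add: lcross_scaleR_left lcross_add_left lcross_self)
  with has_vector_derivative_lcross[OF h q] show ?thesis
    by (simp add: anormal_eq_lcross H_def)
qed

lemma dist_param_mannheim_offset:
  assumes QQ: "lor Q Q = -1" and D: "spacelike D" and QD: "lor Q D = 0"
    and dqs: "spacelike dqs" "cnormal dqs = anormal Q D"
  shows "dist_param (Q - k *\<^sub>R cnormal D) (\<alpha> *\<^sub>R Q + \<beta> *\<^sub>R cnormal D) dqs
    = (\<beta> + k * \<alpha>) / lnorm dqs"
proof -
  define H where "H = cnormal D"
  define M where "M = lnorm dqs"
  have HH: "lor H H = 1"
    using D by (simp add: H_def lor_cnormal_cnormal)
  have QH: "lor Q H = 0"
    using QD by (simp add: H_def cnormal_def lor_scaleR_right)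
  have M: "M > 0"
    using dqs(1) by (simp add: M_def lnorm_pos)
  have dqs_eq: "dqs = M *\<^sub>R lcross H Q"
    using dqs scaleR_lnorm_cnormal[of dqs] by (simp add: M_def H_def anormal_eq_lcross)
  have "lor (lcross H Q) (lcross H Q) = 1"
    using QQ HH QH lor_commute[of Q H] by (simp add: lor_lcross_lcross)
  then have "lor dqs dqs = M * M"
    by (simp add: dqs_eq lor_scaleR_left lor_scaleR_right)
  moreover have "det3 (Q - k *\<^sub>R H) (\<alpha> *\<^sub>R Q + \<beta> *\<^sub>R H) dqs = M * (\<beta> + k * \<alpha>)"
    using det3_lorentz_frame[OF QQ HH QH] by (simp add: dqs_eq det3_plane det3_scaleR_right)
  ultimately show ?thesis
    using M unfolding dist_param_def H_def[symmetric] M_def[symmetric] by simp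
qed

theorem theorem5p1:
  fixes I :: "real set"
    and c q dc dq qs dqs :: "real \<Rightarrow> real^3"
    and s1 \<kappa> \<theta> :: "real \<Rightarrow> real"
    and R :: real
  assumes I_open: "open I"
    \<comment> \<open>the base ruled surface phi(s,v) = c(s) + v q(s)\<close>
    and c_deriv: "\<And>s. s \<in> I \<Longrightarrow> (c has_vector_derivative dc s) (at s)"
    and q_deriv: "\<And>s. s \<in> I \<Longrightarrow> (q has_vector_derivative dq s) (at s)"
    and q_unit_timelike: "\<And>s. s \<in> I \<Longrightarrow> lor (q s) (q s) = -1"
    and h_spacelike: "\<And>s. s \<in> I \<Longrightarrow> spacelike (dq s)"
    and striction: "\<And>s. s \<in> I \<Longrightarrow> lor (dq s) (dc s) = 0"
    and arclength: "\<And>s. s \<in> I \<Longrightarrow> lnorm (dc s) = 1"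
    and orient: "\<And>s. s \<in> I \<Longrightarrow> lor (dc s) (q s) < 0"
    \<comment> \<open>s1: arc length of the spherical image of q\<close>
    and s1_deriv: "\<And>s. s \<in> I \<Longrightarrow> (s1 has_real_derivative lnorm (dq s)) (at s)"
    \<comment> \<open>Frenet formula dh/ds1 = q + kappa a (type M^1_-, eps2 = -1), defining kappa\<close>
    and frenet: "\<And>s. s \<in> I \<Longrightarrow>
       ((\<lambda>t. cnormal (dq t)) has_vector_derivative
          (deriv s1 s *\<^sub>R (q s + \<kappa> s *\<^sub>R anormal (q s) (dq s)))) (at s)"
    \<comment> \<open>phi is developable\<close>
    and developable: "\<And>s. s \<in> I \<Longrightarrow> dist_param (dc s) (q s) (dq s) = 0"
    \<comment> \<open>the Mannheim offset phi*(s,v) = c(s) + R a(s) + v q*(s)\<close>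
    and qs_deriv: "\<And>s. s \<in> I \<Longrightarrow> (qs has_vector_derivative dqs s) (at s)"
    and dqs_nonnull: "\<And>s. s \<in> I \<Longrightarrow> nonnull (dqs s)"
    and mannheim: "\<And>s. s \<in> I \<Longrightarrow> cnormal (dqs s) = anormal (q s) (dq s)"
    and striction_star: "\<And>s. s \<in> I \<Longrightarrow>
       lor (dqs s) (vector_derivative (\<lambda>t. c t + R *\<^sub>R anormal (q t) (dq t)) (at s)) = 0"
  shows
   "((\<forall>s\<in>I. lor (qs s) (qs s) = 1 \<and> spacelike (dqs s) \<and>
             qs s = sinh (\<theta> s) *\<^sub>R q s + cosh (\<theta> s) *\<^sub>R cnormal (dq s)) \<longrightarrow>
       ((\<forall>s\<in>I. dist_param
                 (vector_derivative (\<lambda>t. c t + R *\<^sub>R anormal (q t) (dq t)) (at s))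
                 (qs s) (dqs s) = 0)
        \<longleftrightarrow> (\<forall>s\<in>I. cosh (\<theta> s) + R * \<kappa> s * deriv s1 s * sinh (\<theta> s) = 0)))
    \<and>
    ((\<forall>s\<in>I. lor (qs s) (qs s) = -1 \<and> spacelike (dqs s) \<and>
             qs s = cosh (\<theta> s) *\<^sub>R q s + sinh (\<theta> s) *\<^sub>R cnormal (dq s)) \<longrightarrow>
       ((\<forall>s\<in>I. dist_param
                 (vector_derivative (\<lambda>t. c t + R *\<^sub>R anormal (q t) (dq t)) (at s))
                 (qs s) (dqs s) = 0)
        \<longleftrightarrow> (\<forall>s\<in>I. sinh (\<theta> s) + R * \<kappa> s * deriv s1 s * cosh (\<theta> s) = 0)))"
proof -
  let ?c_star = "\<lambda>t. c t + R *\<^sub>R anormal (q t) (dq t)"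
  have offset: "dist_param (vector_derivative ?c_star (at s)) (\<alpha> *\<^sub>R q s + \<beta> *\<^sub>R cnormal (dq s)) (dqs s)
      = 0 \<longleftrightarrow> \<beta> + R * \<kappa> s * deriv s1 s * \<alpha> = 0"
    if s: "s \<in> I" and dqs: "spacelike (dqs s)" for s \<alpha> \<beta>
  proof -
    have QD: "lor (q s) (dq s) = 0"
      using lor_derivative_eq_0_if_lor_const[OF I_open s q_unit_timelike q_deriv[OF s]] .
    have "det3 (dc s) (q s) (dq s) = 0"
      using developable[OF s] h_spacelike[OF s] by (simp add: dist_param_def spacelike_def)
    then have "dc s = q s"
      using developable_tangent_eq_ruling q_unit_timelike h_spacelike striction arclength orient QD s
      by blast
    then have "(?c_star has_vector_derivative q s - (R * \<kappa> s * deriv s1 s) *\<^sub>R cnormal (dq s)) (at s)"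
      using has_vector_derivative_add[OF c_deriv[OF s] has_vector_derivative_scaleR[OF DERIV_const
          has_vector_derivative_anormal[OF q_deriv[OF s] frenet[OF s] q_unit_timelike[OF s] QD
            h_spacelike[OF s]]]]
      by (simp add: algebra_simps)
    then show ?thesis
      using dist_param_mannheim_offset[OF q_unit_timelike[OF s] h_spacelike[OF s] QD dqs mannheim[OF s]]
        lnorm_pos[OF dqs] by (simp add: vector_derivative_at)
  qed
  show ?thesis
    using offset[of _ "sinh (\<theta> _)" "cosh (\<theta> _)"] offset[of _ "cosh (\<theta> _)" "sinh (\<theta> _)"]
    by (auto simp: mult.commute mult.left_commute)
qed

end
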